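(* Let $0<\phi<90^\circ$ be the vertical apex angle of the obstacle sensor, let $v_{xy}>0$ and $v_z=\tan(\phi/2)\,v_{xy}$, and consider the visibility-constrained planning graph described in the context. For a node at position $p_n$ and a target position $p_t$ (both voxel centers), let $d=p_n-p_t=(d_x,d_y,d_z)$ and define $$z_e=\min\Big(|d_z|,\ \tan\tfrac{\phi}{2}\sqrt{d_x^2+d_y^2}\Big),\qquad z_z=\frac{\max(0,|d_z|-z_e)}{v_z}\sqrt{v_{xy}^2+v_z^2},$$ $$h(d)=\sqrt{d_x^2+d_y^2+z_e^2}+z_z .$$ Then $h$ is an admissible heuristic for A* search in this graph, i.e. for every node, $h(p_n-p_t)$ is at most the cost of a shortest path in the graph from that node to any node located at the target position $p_t$.
   Context: Planning graph: space is partitioned into an anisotropic regular voxel grid whose voxels have horizontal edge lengths $v_{xy}$ (in $x$ and $y$) and height $v_z=\tan(\phi/2)v_{xy}$. Vertices correspond to voxel centers (possibly augmented by an additional discrete flight-direction coordinate taking one of eight planar directions; this extra coordinate only restricts which edges are present). Each voxel center is connected by edges to the centers of the voxels in its 26-neighborhood (Moore neighborhood), except that the two edges to the voxels directly above and directly below are removed; some further edges (large changes of flight direction) may also be removed. Thus every edge changes position by a vector $(a v_{xy}, b v_{xy}, c v_z)$ with $a,b,c\in\{-1,0,1\}$ and $(a,b)\neq(0,0)$. The cost of an edge is at least the Euclidean length of this displacement (additional nonnegative costs such as obstacle-proximity costs may be added), and the cost of a path is the sum of its edge costs. A heuristic is admissible if it never overestimates the cost of the cheapest path to the target. *)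

theory Defs
  imports "HOL-Analysis.Analysis"
begin

type_synonym pos3 = "real \<times> real \<times> real"

definition len3 :: "pos3 \<Rightarrow> real" where
  "len3 p = (case p of (x, y, z) \<Rightarrow> sqrt (x^2 + y^2 + z^2))"

definition diff3 :: "pos3 \<Rightarrow> pos3 \<Rightarrow> pos3" where
  "diff3 p q = (case p of (x1, y1, z1) \<Rightarrow> case q of (x2, y2, z2) \<Rightarrow> (x1 - x2, y1 - y2, z1 - z2))"

definition vz_of :: "real \<Rightarrow> real \<Rightarrow> real" where
  "vz_of phi vxy = tan (phi / 2) * vxy"

definition voxel_center :: "real \<Rightarrow> real \<Rightarrow> pos3 \<Rightarrow> pos3 \<Rightarrow> bool" where
  "voxel_center vxy vz org p \<longleftrightarrow> (\<exists>i j k :: int.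
      p = (fst org + of_int i * vxy, fst (snd org) + of_int j * vxy, snd (snd org) + of_int k * vz))"

definition allowed_move :: "real \<Rightarrow> real \<Rightarrow> pos3 \<Rightarrow> bool" where
  "allowed_move vxy vz d \<longleftrightarrow> (\<exists>a b c :: int. a \<in> {-1,0,1} \<and> b \<in> {-1,0,1} \<and> c \<in> {-1,0,1}
      \<and> (a, b) \<noteq> (0, 0) \<and> d = (of_int a * vxy, of_int b * vxy, of_int c * vz))"

definition heur :: "real \<Rightarrow> real \<Rightarrow> pos3 \<Rightarrow> real" where
  "heur phi vxy d = (case d of (dx, dy, dz) \<Rightarrow>
     let vz = vz_of phi vxy;
         ze = min \<bar>dz\<bar> (tan (phi / 2) * sqrt (dx^2 + dy^2));
         zz = max 0 (\<bar>dz\<bar> - ze) / vz * sqrt (vxy^2 + vz^2)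
     in sqrt (dx^2 + dy^2 + ze^2) + zz)"

definition is_path :: "('v \<Rightarrow> 'v \<Rightarrow> bool) \<Rightarrow> 'v list \<Rightarrow> bool" where
  "is_path E vs \<longleftrightarrow> vs \<noteq> [] \<and> (\<forall>i. Suc i < length vs \<longrightarrow> E (vs ! i) (vs ! Suc i))"

definition path_cost :: "('v \<Rightarrow> 'v \<Rightarrow> real) \<Rightarrow> 'v list \<Rightarrow> real" where
  "path_cost cost vs = (\<Sum>i < length vs - 1. cost (vs ! i) (vs ! Suc i))"

end

theory Submission
  imports Defs
begin

text \<open>With \<open>t = tan(\<phi>/2)\<close> and \<open>K = sqrt(1 + t\<^sup>2)/t\<close>, the function
  \<open>N(d) = max |d| (K |d\<^sub>z|)\<close> is subadditive. An edge climbs with slope at most \<open>t\<close>,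
  so on every edge \<open>N\<close> is just the Euclidean length, and subadditivity along a path
  bounds the path cost from below by \<open>N\<close> of the total displacement. Finally \<open>h \<le> N\<close>:
  when \<open>|d\<^sub>z| \<le> t |(d\<^sub>x, d\<^sub>y)|\<close> the heuristic is the Euclidean length, and otherwise
  it equals \<open>K |d\<^sub>z|\<close>.\<close>

lemma len3_eq_norm: "len3 p = norm p"
  by (cases p) (simp add: len3_def norm_prod_def add.assoc)

lemma diff3_eq_minus: "diff3 p q = p - q"
  by (cases p; cases q) (simp add: diff3_def)

definition cone_norm :: "real \<Rightarrow> pos3 \<Rightarrow> real" where
  "cone_norm K d = max (norm d) (K * \<bar>snd (snd d)\<bar>)"

lemma cone_norm_zero [simp]: "cone_norm K 0 = 0"
  by (simp add: cone_norm_def)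

lemma cone_norm_minus [simp]: "cone_norm K (- d) = cone_norm K d"
  by (simp add: cone_norm_def)

lemma cone_norm_triangle:
  assumes "0 \<le> K"
  shows "cone_norm K (a + b) \<le> cone_norm K a + cone_norm K b"
proof -
  have "K * \<bar>snd (snd (a + b))\<bar> \<le> K * \<bar>snd (snd a)\<bar> + K * \<bar>snd (snd b)\<bar>"
    using assms by (simp add: mult_left_mono abs_triangle_ineq flip: distrib_left)
  then show ?thesis
    using norm_triangle_ineq[of a b] unfolding cone_norm_def by linarith
qed

lemma is_path_Cons_Cons: "is_path E (u # w # r) \<longleftrightarrow> E u w \<and> is_path E (w # r)"
proof -
  have "(\<forall>i. Suc i < length (u # w # r) \<longrightarrow> E ((u # w # r) ! i) ((u # w # r) ! Suc i))
      \<longleftrightarrow> E u w \<and> (\<forall>i. Suc i < length (w # r) \<longrightarrow> E ((w # r) ! i) ((w # r) ! Suc i))"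
    by (metis (no_types, lifting) Suc_less_eq length_Cons nth_Cons_0 nth_Cons_Suc not0_implies_Suc zero_less_Suc)
  then show ?thesis by (simp add: is_path_def)
qed

lemma path_cost_Cons_Cons: "path_cost c (u # w # r) = c u w + path_cost c (w # r)"
  unfolding path_cost_def by (simp add: sum.lessThan_Suc_shift del: sum.lessThan_Suc)

lemma subadditive_le_path_cost:
  fixes f :: "'a::ab_group_add \<Rightarrow> real"
  assumes f0: "f 0 = 0"
    and f_add: "\<And>a b. f (a + b) \<le> f a + f b"
    and f_edge: "\<And>u w. E u w \<Longrightarrow> f (pos w - pos u) \<le> cost u w"
    and "is_path E vs"
  shows "f (pos (last vs) - pos (hd vs)) \<le> path_cost cost vs"
  using \<open>is_path E vs\<close>
proof (induction vs rule: induct_list012)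
  case 1
  then show ?case by (simp add: is_path_def)
next
  case (2 u)
  then show ?case by (simp add: f0 path_cost_def)
next
  case (3 u w r)
  then have edge: "E u w" and path: "is_path E (w # r)"
    by (simp_all add: is_path_Cons_Cons)
  have "f (pos (last (u # w # r)) - pos u)
      \<le> f (pos (last (w # r)) - pos w) + f (pos w - pos u)"
    using f_add[of "pos (last (w # r)) - pos w" "pos w - pos u"] by simp
  also have "\<dots> \<le> path_cost cost (w # r) + cost u w"
    using "3.IH"(2)[OF path] f_edge[OF edge] by simp
  finally show ?case by (simp add: path_cost_Cons_Cons)
qed

text \<open>Since \<open>a\<^sup>2 + b\<^sup>2 \<ge> 1 \<ge> c\<^sup>2\<close>, the vertical part \<open>c t v\<close> of an edge is at most \<open>t\<close> times
  its horizontal length.\<close>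
lemma cone_norm_allowed_move:
  assumes t: "0 < t" and move: "allowed_move vxy (t * vxy) d"
  shows "cone_norm (sqrt (1 + t\<^sup>2) / t) d = norm d"
proof -
  obtain a b c :: int where abc: "a \<in> {-1,0,1}" "b \<in> {-1,0,1}" "c \<in> {-1,0,1}" "(a, b) \<noteq> (0, 0)"
    and d: "d = (of_int a * vxy, of_int b * vxy, of_int c * (t * vxy))"
    using move unfolding allowed_move_def by blast
  have c2: "(real_of_int c)\<^sup>2 \<le> 1" and ab2: "1 \<le> (real_of_int a)\<^sup>2 + (real_of_int b)\<^sup>2"
    using abc by auto
  have norm_d: "norm d = sqrt ((of_int a * vxy)\<^sup>2 + (of_int b * vxy)\<^sup>2 + (of_int c * (t * vxy))\<^sup>2)"
    using len3_eq_norm[of d] by (simp add: d len3_def)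
  have "(sqrt (1 + t\<^sup>2) / t * \<bar>of_int c * (t * vxy)\<bar>)\<^sup>2
      = (real_of_int c)\<^sup>2 * vxy\<^sup>2 + (real_of_int c)\<^sup>2 * (t * vxy)\<^sup>2"
    using t by (simp add: power_mult_distrib power_divide field_simps)
  also have "\<dots> \<le> ((real_of_int a)\<^sup>2 + (real_of_int b)\<^sup>2) * vxy\<^sup>2 + (real_of_int c)\<^sup>2 * (t * vxy)\<^sup>2"
    using c2 ab2 by (intro add_right_mono mult_right_mono) auto
  also have "\<dots> = (of_int a * vxy)\<^sup>2 + (of_int b * vxy)\<^sup>2 + (of_int c * (t * vxy))\<^sup>2"
    by (simp add: algebra_simps power_mult_distrib)
  finally have "sqrt (1 + t\<^sup>2) / t * \<bar>of_int c * (t * vxy)\<bar> \<le> norm d"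
    unfolding norm_d by (intro real_le_rsqrt)
  then show ?thesis by (simp add: cone_norm_def d)
qed

lemma heur_le_cone_norm:
  assumes t: "t = tan (phi / 2)" "0 < t" and vxy: "0 < vxy"
  shows "heur phi vxy d \<le> cone_norm (sqrt (1 + t\<^sup>2) / t) d"
proof -
  obtain dx dy dz where d: "d = (dx, dy, dz)" by (cases d) auto
  define r where "r = sqrt (dx\<^sup>2 + dy\<^sup>2)"
  define S where "S = sqrt (1 + t\<^sup>2)"
  have r: "0 \<le> r" "r\<^sup>2 = dx\<^sup>2 + dy\<^sup>2" unfolding r_def by simp_all
  have norm_d: "norm d = sqrt (dx\<^sup>2 + dy\<^sup>2 + dz\<^sup>2)"
    using len3_eq_norm[of d] by (simp add: d len3_def)
  have heur_d: "heur phi vxy d = sqrt (dx\<^sup>2 + dy\<^sup>2 + (min \<bar>dz\<bar> (t * r))\<^sup>2)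
      + max 0 (\<bar>dz\<bar> - min \<bar>dz\<bar> (t * r)) / (t * vxy) * sqrt (vxy\<^sup>2 + (t * vxy)\<^sup>2)"
    unfolding heur_def d vz_of_def Let_def r_def t(1) by simp
  show ?thesis
  proof (cases "\<bar>dz\<bar> \<le> t * r")
    case True
    then have "heur phi vxy d = norm d" using heur_d norm_d by (simp add: min_def)
    then show ?thesis unfolding cone_norm_def by simp
  next
    case False
    have "dx\<^sup>2 + dy\<^sup>2 + (t * r)\<^sup>2 = r\<^sup>2 * (1 + t\<^sup>2)" and "vxy\<^sup>2 + (t * vxy)\<^sup>2 = vxy\<^sup>2 * (1 + t\<^sup>2)"
      using r by (simp_all add: algebra_simps)
    then have "sqrt (dx\<^sup>2 + dy\<^sup>2 + (t * r)\<^sup>2) = r * S" and "sqrt (vxy\<^sup>2 + (t * vxy)\<^sup>2) = vxy * S"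
      using r vxy by (simp_all add: S_def r_def real_sqrt_mult)
    then have "heur phi vxy d = r * S + (\<bar>dz\<bar> - t * r) / (t * vxy) * (vxy * S)"
      using heur_d False by simp
    also have "\<dots> = S / t * \<bar>dz\<bar>"
      using t vxy by (simp add: field_simps)
    finally show ?thesis unfolding cone_norm_def S_def d by simp
  qed
qed

theorem corollary1:
  fixes phi vxy :: real
    and pos :: "'v \<Rightarrow> pos3"
    and E :: "'v \<Rightarrow> 'v \<Rightarrow> bool"
    and cost :: "'v \<Rightarrow> 'v \<Rightarrow> real"
    and org :: pos3
    and vs :: "'v list"
    and pt :: pos3
  assumes "0 < phi" and "phi < pi / 2" and "0 < vxy"
    and "\<And>v. voxel_center vxy (vz_of phi vxy) org (pos v)"
    and "\<And>u w. E u w \<Longrightarrow> allowed_move vxy (vz_of phi vxy) (diff3 (pos w) (pos u))"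
    and "\<And>u w. E u w \<Longrightarrow> cost u w \<ge> len3 (diff3 (pos w) (pos u))"
    and "is_path E vs"
    and "pos (last vs) = pt"
  shows "heur phi vxy (diff3 (pos (hd vs)) pt) \<le> path_cost cost vs"
proof -
  define t where "t = tan (phi / 2)"
  define K where "K = sqrt (1 + t\<^sup>2) / t"
  have t: "0 < t" unfolding t_def using assms(1,2) by (intro tan_gt_zero) auto
  then have "0 \<le> K" by (simp add: K_def)
  have edge: "cone_norm K (pos w - pos u) \<le> cost u w" if "E u w" for u w
    using cone_norm_allowed_move[OF t, of vxy "pos w - pos u"] assms(5,6)[OF that]
    by (simp add: K_def t_def vz_of_def diff3_eq_minus len3_eq_norm mult.commute)
  have "heur phi vxy (pos (hd vs) - pt) \<le> cone_norm K (pos (hd vs) - pt)"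
    unfolding K_def using heur_le_cone_norm[OF t_def t assms(3)] .
  also have "\<dots> = cone_norm K (pos (last vs) - pos (hd vs))"
    using cone_norm_minus[of K "pos (hd vs) - pt"] assms(8) by simp
  also have "\<dots> \<le> path_cost cost vs"
    using subadditive_le_path_cost[of "cone_norm K", OF _ cone_norm_triangle[OF \<open>0 \<le> K\<close>] edge]
      assms(7) by simp
  finally show ?thesis by (simp add: diff3_eq_minus)
qed

end
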